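(* Let $S>0$, $I\ge1$, $J\in\{1,\dots,I\}$, $N_1,\dots,N_I$ positive integers and $\theta_1>\dots>\theta_I>0$. Consider the partial price differentiation problem: maximize $\sum_{i=1}^I n_ip_is_i$ over prices $p^1,\dots,p^J>0$, assignments $a_i^j\in\{0,1\}$ with $\sum_{j=1}^J a_i^j=1$ for each $i$, and $n_i\in\{0,\dots,N_i\}$, subject to $p_i=\sum_{j=1}^J a_i^jp^j$, $s_i=(\theta_i/p_i-1)^+$ for each $i$, and $\sum_{i=1}^I n_is_i\le S$. Call group $i$ effective in a feasible solution if $n_is_i>0$. Then at any optimal solution of this problem, the set of effective groups is $\{1,2,\dots,K\}$ for some integer $K$.
   Context: Group $i$ consists of $N_i$ users each with utility $\theta_i\ln(1+s)$; a user facing unit price $p$ demands $(\theta_i/p-1)^+$, where $(x)^+=\max(x,0)$. The service provider has total resource $S$ and may use at most $J$ distinct unit prices, each group being charged one of them. *)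

theory Defs
  imports Complex_Main
begin

definition pos_part :: "real \<Rightarrow> real" where
  "pos_part x = max x 0"

definition group_price :: "nat \<Rightarrow> (nat \<Rightarrow> real) \<Rightarrow> (nat \<Rightarrow> nat \<Rightarrow> real) \<Rightarrow> nat \<Rightarrow> real" where
  "group_price J p a i = (\<Sum>j=1..J. a i j * p j)"

definition demand :: "nat \<Rightarrow> (nat \<Rightarrow> real) \<Rightarrow> (nat \<Rightarrow> real) \<Rightarrow> (nat \<Rightarrow> nat \<Rightarrow> real) \<Rightarrow> nat \<Rightarrow> real" where
  "demand J theta p a i = pos_part (theta i / group_price J p a i - 1)"

definition feasible ::
  "real \<Rightarrow> nat \<Rightarrow> nat \<Rightarrow> (nat \<Rightarrow> nat) \<Rightarrow> (nat \<Rightarrow> real)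
   \<Rightarrow> (nat \<Rightarrow> real) \<Rightarrow> (nat \<Rightarrow> nat \<Rightarrow> real) \<Rightarrow> (nat \<Rightarrow> nat) \<Rightarrow> bool" where
  "feasible S I J N theta p a n \<longleftrightarrow>
     (\<forall>j\<in>{1..J}. p j > 0) \<and>
     (\<forall>i\<in>{1..I}. \<forall>j\<in>{1..J}. a i j \<in> {0, 1}) \<and>
     (\<forall>i\<in>{1..I}. (\<Sum>j=1..J. a i j) = 1) \<and>
     (\<forall>i\<in>{1..I}. n i \<le> N i) \<and>
     (\<Sum>i=1..I. real (n i) * demand J theta p a i) \<le> S"

definition revenue ::
  "nat \<Rightarrow> nat \<Rightarrow> (nat \<Rightarrow> real) \<Rightarrow> (nat \<Rightarrow> real) \<Rightarrow> (nat \<Rightarrow> nat \<Rightarrow> real) \<Rightarrow> (nat \<Rightarrow> nat) \<Rightarrow> real" where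
  "revenue I J theta p a n =
     (\<Sum>i=1..I. real (n i) * group_price J p a i * demand J theta p a i)"

definition optimal ::
  "real \<Rightarrow> nat \<Rightarrow> nat \<Rightarrow> (nat \<Rightarrow> nat) \<Rightarrow> (nat \<Rightarrow> real)
   \<Rightarrow> (nat \<Rightarrow> real) \<Rightarrow> (nat \<Rightarrow> nat \<Rightarrow> real) \<Rightarrow> (nat \<Rightarrow> nat) \<Rightarrow> bool" where
  "optimal S I J N theta p a n \<longleftrightarrow>
     feasible S I J N theta p a n \<and>
     (\<forall>p' a' n'. feasible S I J N theta p' a' n' \<longrightarrow>
        revenue I J theta p' a' n' \<le> revenue I J theta p a n)"

definition effective_groups ::
  "nat \<Rightarrow> nat \<Rightarrow> (nat \<Rightarrow> real) \<Rightarrow> (nat \<Rightarrow> real) \<Rightarrow> (nat \<Rightarrow> nat \<Rightarrow> real) \<Rightarrow> (nat \<Rightarrow> nat) \<Rightarrow> nat set" where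
  "effective_groups I J theta p a n = {i\<in>{1..I}. real (n i) * demand J theta p a i > 0}"

end

theory Submission
  imports Defs
begin

text \<open>Suppose group i is effective while a group i' with larger valuation is not. Charge i' the
  price level p j0 of i and move one user from i to i'. At the old price this strictly raises the
  resource consumed at level j0, since a user of i' demands more than a user of i. That consumption
  decreases continuously to 0 as the price grows, so some price x > p j0 restores its old value B:
  the budget S is still met and the revenue of level j0 grows from p j0 * B to x * B. Hence at an
  optimum every group valued above an effective group is effective.\<close>

lemma sum_diff_eq_on_subset:
  fixes f g :: "'a \<Rightarrow> 'b::ab_group_add"
  assumes "finite A" "C \<subseteq> A" "\<And>k. k \<in> A - C \<Longrightarrow> f k = g k"
  shows "sum f A - sum g A = sum f C - sum g C"
proof -
  have "sum f A = sum f (A - C) + sum f C" "sum g A = sum g (A - C) + sum g C"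
    using assms(1,2) by (simp_all add: sum.subset_diff)
  moreover have "sum f (A - C) = sum g (A - C)"
    using assms(3) by (rule sum.cong[OF refl])
  ultimately show ?thesis by simp
qed

lemma step_decreasing_less:
  fixes f :: "nat \<Rightarrow> 'a::order"
  assumes "\<forall>i\<in>{1..<I}. f (i + 1) < f i" "1 \<le> m"
  shows "m < k \<Longrightarrow> k \<le> I \<Longrightarrow> f k < f m"
proof (induction k)
  case 0
  then show ?case by simp
next
  case (Suc k)
  have "f (Suc k) < f k"
    using assms Suc.prems by force
  then show ?case
    using Suc by (cases "m = k") auto
qed

lemma exists_price_with_load:
  fixes w theta :: "'a \<Rightarrow> real"
  assumes "finite C" "0 < p0" "0 < L"
    and "L < (\<Sum>k\<in>C. w k * pos_part (theta k / p0 - 1))"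
  shows "\<exists>x>p0. (\<Sum>k\<in>C. w k * pos_part (theta k / x - 1)) = L"
proof -
  define load where "load x = (\<Sum>k\<in>C. w k * pos_part (theta k / x - 1))" for x
  define M where "M = p0 + (\<Sum>k\<in>C. \<bar>theta k\<bar>)"
  have "p0 \<le> M"
    by (simp add: M_def sum_nonneg)
  have "load M = 0"
    unfolding load_def
  proof (intro sum.neutral ballI)
    fix k assume "k \<in> C"
    then have "theta k \<le> (\<Sum>k\<in>C. \<bar>theta k\<bar>)"
      using \<open>finite C\<close> by (meson abs_ge_self abs_ge_zero member_le_sum order_trans)
    then have "theta k \<le> M"
      using \<open>0 < p0\<close> by (simp add: M_def)
    then have "theta k / M \<le> 1"
      using \<open>0 < p0\<close> \<open>p0 \<le> M\<close> by (simp add: divide_le_eq_1)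
    then show "w k * pos_part (theta k / M - 1) = 0"
      by (simp add: pos_part_def)
  qed
  moreover have "continuous_on {p0..M} load"
    unfolding load_def pos_part_def using \<open>0 < p0\<close> by (intro continuous_intros) auto
  moreover have "L < load p0"
    using assms(4) by (simp add: load_def)
  ultimately obtain x where "p0 \<le> x" "load x = L"
    using IVT2'[of load M L p0] \<open>0 < L\<close> \<open>p0 \<le> M\<close> by auto
  then show ?thesis
    using \<open>L < load p0\<close> unfolding load_def by (metis order_less_irrefl order_le_less)
qed

lemma transfer_user_raises_load:
  fixes s L :: "'a \<Rightarrow> real" and n :: "'a \<Rightarrow> nat"
  assumes "finite C" "i \<in> C" "i' \<in> C" "i \<noteq> i'" "1 \<le> n i" "s i < s i'"
    and "\<And>k. k \<in> C - {i'} \<Longrightarrow> L k = real (n k) * s k" "L i' = 0"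
  shows "(\<Sum>k\<in>C. L k) < (\<Sum>k\<in>C. real ((n(i := n i - 1, i' := 1)) k) * s k)"
proof -
  let ?n' = "n(i := n i - 1, i' := 1)"
  have "(\<Sum>k\<in>C. real (?n' k) * s k) - (\<Sum>k\<in>C. L k)
      = (\<Sum>k\<in>{i, i'}. real (?n' k) * s k) - (\<Sum>k\<in>{i, i'}. L k)"
    using assms by (intro sum_diff_eq_on_subset) auto
  also have "\<dots> = s i' - s i"
    using assms by (simp add: of_nat_diff algebra_simps)
  finally show ?thesis
    using assms(6) by simp
qed

definition assignment :: "nat \<Rightarrow> (nat \<Rightarrow> real) \<Rightarrow> bool" where
  "assignment J c \<longleftrightarrow> (\<forall>j\<in>{1..J}. c j \<in> {0, 1}) \<and> (\<Sum>j=1..J. c j) = 1"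

lemma assignment_obtain:
  assumes "assignment J c"
  obtains j where "j \<in> {1..J}" "c j = 1"
  using assms unfolding assignment_def
  by (metis (no_types, lifting) insert_iff singletonD sum.neutral zero_neq_one)

lemma assignment_sum_mult:
  assumes "assignment J c" "j \<in> {1..J}" "c j = 1"
  shows "(\<Sum>l=1..J. c l * f l) = f j"
proof -
  have sum_c: "(\<Sum>l=1..J. c l) = c j + (\<Sum>l\<in>{1..J} - {j}. c l)"
    and sum_cf: "(\<Sum>l=1..J. c l * f l) = c j * f j + (\<Sum>l\<in>{1..J} - {j}. c l * f l)"
    using assms(2) by (simp_all add: sum.remove)
  have "(\<Sum>l\<in>{1..J} - {j}. c l) = 0"
    using sum_c assms(1,3) unfolding assignment_def by simp
  moreover have "\<And>l. l \<in> {1..J} - {j} \<Longrightarrow> 0 \<le> c l"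
    using assms(1) unfolding assignment_def by force
  ultimately have "\<forall>l\<in>{1..J} - {j}. c l = 0"
    using sum_nonneg_eq_0_iff[of "{1..J} - {j}" c] by blast
  then show ?thesis
    using sum_cf assms(3) by simp
qed

lemma assignment_entry_zero:
  "assignment J c \<Longrightarrow> j \<in> {1..J} \<Longrightarrow> c j \<noteq> 1 \<Longrightarrow> c j = 0"
  by (auto simp: assignment_def)

definition load ::
  "nat \<Rightarrow> (nat \<Rightarrow> real) \<Rightarrow> (nat \<Rightarrow> real) \<Rightarrow> (nat \<Rightarrow> nat \<Rightarrow> real) \<Rightarrow> (nat \<Rightarrow> nat) \<Rightarrow> nat \<Rightarrow> real" where
  "load J theta p a n k = real (n k) * demand J theta p a k"

lemma load_nonneg: "0 \<le> load J theta p a n k"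
  by (simp add: load_def demand_def pos_part_def)

lemma feasible_iff:
  "feasible S I J N theta p a n \<longleftrightarrow>
     (\<forall>j\<in>{1..J}. 0 < p j) \<and> (\<forall>k\<in>{1..I}. assignment J (a k)) \<and>
     (\<forall>k\<in>{1..I}. n k \<le> N k) \<and> (\<Sum>k=1..I. load J theta p a n k) \<le> S"
  by (auto simp: feasible_def assignment_def load_def)

lemma revenue_eq_sum_load:
  "revenue I J theta p a n = (\<Sum>k=1..I. group_price J p a k * load J theta p a n k)"
  unfolding revenue_def load_def by (simp add: algebra_simps)

lemma effective_groups_eq:
  "effective_groups I J theta p a n = {k\<in>{1..I}. 0 < load J theta p a n k}"
  by (simp add: effective_groups_def load_def)

lemma group_price_eq_level:
  "assignment J (a k) \<Longrightarrow> j \<in> {1..J} \<Longrightarrow> a k j = 1 \<Longrightarrow> group_price J p a k = p j"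
  unfolding group_price_def by (rule assignment_sum_mult)

lemma load_at_level:
  "assignment J (a k) \<Longrightarrow> j \<in> {1..J} \<Longrightarrow> a k j = 1 \<Longrightarrow>
     load J theta p a n k = real (n k) * pos_part (theta k / p j - 1)"
  by (simp add: load_def demand_def group_price_eq_level)

lemma group_price_upd_unassigned:
  "a k j = 0 \<Longrightarrow> group_price J (p(j := x)) a k = group_price J p a k"
  unfolding group_price_def by (intro sum.cong) auto

lemma load_upd_unassigned:
  "a k j = 0 \<Longrightarrow> load J theta (p(j := x)) a n k = load J theta p a n k"
  by (simp add: load_def demand_def group_price_upd_unassigned)

lemma repricing_level_differences:
  assumes j0: "j0 \<in> {1..J}" and rows': "\<forall>k\<in>{1..I}. assignment J (a' k)"
    and C: "C = {k\<in>{1..I}. a' k j0 = 1}"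
    and off_C: "\<And>k. k \<in> {1..I} - C \<Longrightarrow> a' k = a k \<and> n' k = n k"
  shows "(\<Sum>k=1..I. load J theta (p(j0 := x)) a' n' k) - (\<Sum>k=1..I. load J theta p a n k)
      = (\<Sum>k\<in>C. real (n' k) * pos_part (theta k / x - 1)) - (\<Sum>k\<in>C. load J theta p a n k)"
    and "revenue I J theta (p(j0 := x)) a' n' - revenue I J theta p a n
      = x * (\<Sum>k\<in>C. real (n' k) * pos_part (theta k / x - 1))
        - (\<Sum>k\<in>C. group_price J p a k * load J theta p a n k)"
proof -
  let ?p' = "p(j0 := x)"
  have "C \<subseteq> {1..I}"
    using C by auto
  have unchanged: "load J theta ?p' a' n' k = load J theta p a n k \<and>
      group_price J ?p' a' k = group_price J p a k" if "k \<in> {1..I} - C" for k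
  proof -
    have "a' k j0 = 0"
      using assignment_entry_zero[of J "a' k" j0] that rows' j0 C by auto
    then have "load J theta ?p' a' n' k = load J theta p a' n' k"
      and "group_price J ?p' a' k = group_price J p a' k"
      by (simp_all add: load_upd_unassigned group_price_upd_unassigned)
    then show ?thesis
      using off_C[OF that] by (simp add: load_def demand_def group_price_def)
  qed
  have at_level: "group_price J ?p' a' k = x"
    "load J theta ?p' a' n' k = real (n' k) * pos_part (theta k / x - 1)" if "k \<in> C" for k
    using group_price_eq_level[of J a' k j0 ?p'] load_at_level[of J a' k j0 theta ?p' n'] rows' that C j0
    by auto
  have "(\<Sum>k=1..I. load J theta ?p' a' n' k) - (\<Sum>k=1..I. load J theta p a n k)
      = (\<Sum>k\<in>C. load J theta ?p' a' n' k) - (\<Sum>k\<in>C. load J theta p a n k)"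
    using \<open>C \<subseteq> {1..I}\<close> unchanged by (intro sum_diff_eq_on_subset) auto
  then show "(\<Sum>k=1..I. load J theta ?p' a' n' k) - (\<Sum>k=1..I. load J theta p a n k)
      = (\<Sum>k\<in>C. real (n' k) * pos_part (theta k / x - 1)) - (\<Sum>k\<in>C. load J theta p a n k)"
    using at_level(2) by simp
  have "revenue I J theta ?p' a' n' - revenue I J theta p a n
      = (\<Sum>k\<in>C. group_price J ?p' a' k * load J theta ?p' a' n' k)
        - (\<Sum>k\<in>C. group_price J p a k * load J theta p a n k)"
    unfolding revenue_eq_sum_load using \<open>C \<subseteq> {1..I}\<close> unchanged
    by (intro sum_diff_eq_on_subset) auto
  then show "revenue I J theta ?p' a' n' - revenue I J theta p a n
      = x * (\<Sum>k\<in>C. real (n' k) * pos_part (theta k / x - 1))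
        - (\<Sum>k\<in>C. group_price J p a k * load J theta p a n k)"
    using at_level by (simp add: sum_distrib_left)
qed

lemma raising_level_price_improves:
  assumes feas: "feasible S I J N theta p a n" and j0: "j0 \<in> {1..J}"
    and rows': "\<forall>k\<in>{1..I}. assignment J (a' k)" and n'N: "\<forall>k\<in>{1..I}. n' k \<le> N k"
    and C: "C = {k\<in>{1..I}. a' k j0 = 1}"
    and off_C: "\<And>k. k \<in> {1..I} - C \<Longrightarrow> a' k = a k \<and> n' k = n k"
    and old_price: "\<And>k. k \<in> C \<Longrightarrow>
      group_price J p a k * load J theta p a n k = p j0 * load J theta p a n k"
    and pos: "0 < (\<Sum>k\<in>C. load J theta p a n k)"
    and gain: "(\<Sum>k\<in>C. load J theta p a n k)
      < (\<Sum>k\<in>C. real (n' k) * pos_part (theta k / p j0 - 1))"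
  shows "\<exists>x. feasible S I J N theta (p(j0 := x)) a' n' \<and>
           revenue I J theta p a n < revenue I J theta (p(j0 := x)) a' n'"
proof -
  have ppos: "\<forall>j\<in>{1..J}. 0 < p j" and budget: "(\<Sum>k=1..I. load J theta p a n k) \<le> S"
    using feas by (simp_all add: feasible_iff)
  define B where "B = (\<Sum>k\<in>C. load J theta p a n k)"
  have "finite C" "0 < p j0"
    using C ppos j0 by auto
  then obtain x where "p j0 < x" and x: "(\<Sum>k\<in>C. real (n' k) * pos_part (theta k / x - 1)) = B"
    using exists_price_with_load[where w = "\<lambda>k. real (n' k)"] pos gain unfolding B_def by blast
  note differences = repricing_level_differences[OF j0 rows' C off_C, where theta = theta and p = p and x = x]
  have "(\<Sum>k\<in>C. group_price J p a k * load J theta p a n k) = p j0 * B"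
    unfolding B_def sum_distrib_left using old_price by (rule sum.cong[OF refl])
  moreover have "p j0 * B < x * B"
    using \<open>p j0 < x\<close> pos by (simp add: B_def)
  ultimately have "revenue I J theta p a n < revenue I J theta (p(j0 := x)) a' n'"
    using differences(2) x by simp
  moreover have "feasible S I J N theta (p(j0 := x)) a' n'"
    using differences(1) x ppos \<open>0 < p j0\<close> \<open>p j0 < x\<close> rows' n'N budget
    by (auto simp: feasible_iff B_def)
  ultimately show ?thesis
    by blast
qed

lemma effective_group_level:
  assumes feas: "feasible S I J N theta p a n" and i: "i \<in> {1..I}"
    and eff: "0 < load J theta p a n i"
  obtains j where "j \<in> {1..J}" "a i j = 1" "0 < p j" "p j < theta i" "1 \<le> n i"
proof -
  have rows: "\<forall>k\<in>{1..I}. assignment J (a k)"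
    using feas by (simp add: feasible_iff)
  obtain j where j: "j \<in> {1..J}" "a i j = 1"
    using rows i assignment_obtain by blast
  have "0 < p j"
    using feas j by (simp add: feasible_iff)
  moreover have "0 < real (n i) * pos_part (theta i / p j - 1)"
    using eff load_at_level rows i j by metis
  ultimately have "1 \<le> n i" "1 < theta i / p j"
    by (auto simp: zero_less_mult_iff pos_part_def less_max_iff_disj)
  with \<open>0 < p j\<close> have "p j < theta i"
    by (simp add: less_divide_eq_1_pos)
  with j \<open>0 < p j\<close> \<open>1 \<le> n i\<close> show ?thesis
    using that by blast
qed

lemma exchange_improves_revenue:
  assumes feas: "feasible S I J N theta p a n" and "0 < N i'"
    and i: "i \<in> {1..I}" and i': "i' \<in> {1..I}" and "theta i < theta i'"
    and eff: "0 < load J theta p a n i" and ineff: "load J theta p a n i' = 0"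
  shows "\<exists>p' a' n'. feasible S I J N theta p' a' n' \<and>
           revenue I J theta p a n < revenue I J theta p' a' n'"
proof -
  have rows: "\<forall>k\<in>{1..I}. assignment J (a k)" and nN: "\<forall>k\<in>{1..I}. n k \<le> N k"
    using feas by (simp_all add: feasible_iff)
  obtain j0 where j0: "j0 \<in> {1..J}" "a i j0 = 1" and "0 < p j0" "p j0 < theta i" "1 \<le> n i"
    using effective_group_level[OF feas i eff] by blast
  have "i \<noteq> i'"
    using eff ineff by auto
  define a' where "a' = a(i' := a i)"
  define n' where "n' = n(i := n i - 1, i' := 1)"
  define C where "C = {k\<in>{1..I}. a' k j0 = 1}"
  have rows': "\<forall>k\<in>{1..I}. assignment J (a' k)"
    using rows i by (simp add: a'_def)
  have n'N: "\<forall>k\<in>{1..I}. n' k \<le> N k"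
    using nN \<open>0 < N i'\<close> nN[rule_format, OF i] by (auto simp: n'_def)
  have "finite C" "i \<in> C" "i' \<in> C"
    using i i' j0 \<open>i \<noteq> i'\<close> by (auto simp: C_def a'_def)
  have gain: "(\<Sum>k\<in>C. load J theta p a n k)
      < (\<Sum>k\<in>C. real (n' k) * pos_part (theta k / p j0 - 1))"
    unfolding n'_def
  proof (rule transfer_user_raises_load)
    show "pos_part (theta i / p j0 - 1) < pos_part (theta i' / p j0 - 1)"
      using \<open>0 < p j0\<close> \<open>p j0 < theta i\<close> \<open>theta i < theta i'\<close>
      by (simp add: pos_part_def divide_strict_right_mono less_divide_eq)
    show "load J theta p a n k = real (n k) * pos_part (theta k / p j0 - 1)" if "k \<in> C - {i'}" for k
      using that load_at_level rows j0 by (auto simp: C_def a'_def)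
  qed (use \<open>finite C\<close> \<open>i \<in> C\<close> \<open>i' \<in> C\<close> \<open>i \<noteq> i'\<close> \<open>1 \<le> n i\<close> ineff in auto)
  have "load J theta p a n i \<le> (\<Sum>k\<in>C. load J theta p a n k)"
    using \<open>finite C\<close> \<open>i \<in> C\<close> load_nonneg by (intro member_le_sum)
  then have pos: "0 < (\<Sum>k\<in>C. load J theta p a n k)"
    using eff by simp
  have old_price: "group_price J p a k * load J theta p a n k = p j0 * load J theta p a n k"
    if "k \<in> C" for k
    using that ineff group_price_eq_level[of J a k j0 p] rows j0
    by (cases "k = i'") (auto simp: C_def a'_def)
  have off_C: "a' k = a k \<and> n' k = n k" if "k \<in> {1..I} - C" for k
    using that \<open>i \<in> C\<close> \<open>i' \<in> C\<close> by (auto simp: a'_def n'_def)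
  show ?thesis
    using raising_level_price_improves[OF feas j0(1) rows' n'N C_def off_C old_price pos gain]
    by blast
qed

lemma downward_closed_eq_atLeastAtMost:
  fixes E :: "nat set"
  assumes "finite E" "\<forall>k\<in>E. 1 \<le> k" "\<And>k k'. k \<in> E \<Longrightarrow> 1 \<le> k' \<Longrightarrow> k' < k \<Longrightarrow> k' \<in> E"
  shows "\<exists>K. E = {1..K}"
proof (cases "E = {}")
  case True
  then show ?thesis by auto
next
  case False
  then have "Max E \<in> E"
    using assms(1) by simp
  have "E \<subseteq> {1..Max E}"
    using assms(1,2) by auto
  moreover have "{1..Max E} \<subseteq> E"
  proof
    fix k assume "k \<in> {1..Max E}"
    then show "k \<in> E"
      using assms(3)[OF \<open>Max E \<in> E\<close>, of k] \<open>Max E \<in> E\<close> by (cases "k = Max E") auto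
  qed
  ultimately show ?thesis
    by blast
qed

theorem lemma2:
  fixes S :: real and I J :: nat and N :: "nat \<Rightarrow> nat" and theta :: "nat \<Rightarrow> real"
    and p :: "nat \<Rightarrow> real" and a :: "nat \<Rightarrow> nat \<Rightarrow> real" and n :: "nat \<Rightarrow> nat"
  assumes "S > 0" and "I \<ge> 1" and "1 \<le> J" and "J \<le> I"
    and "\<forall>i\<in>{1..I}. N i > 0"
    and "\<forall>i\<in>{1..<I}. theta i > theta (i + 1)"
    and "theta I > 0"
    and "optimal S I J N theta p a n"
  shows "\<exists>K::nat. effective_groups I J theta p a n = {1..K}"
proof (rule downward_closed_eq_atLeastAtMost)
  let ?E = "effective_groups I J theta p a n"
  show "finite ?E" "\<forall>k\<in>?E. 1 \<le> k"
    by (auto simp: effective_groups_def)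
  fix k k' assume "k \<in> ?E" "1 \<le> k'" "k' < k"
  then have k: "k \<in> {1..I}" "0 < load J theta p a n k" and k': "k' \<in> {1..I}"
    by (auto simp: effective_groups_eq)
  have "theta k < theta k'"
    using step_decreasing_less[OF assms(6) \<open>1 \<le> k'\<close> \<open>k' < k\<close>] k by simp
  show "k' \<in> ?E"
  proof (rule ccontr)
    assume "k' \<notin> ?E"
    then have "load J theta p a n k' = 0"
      using k' load_nonneg[of J theta p a n k'] by (simp add: effective_groups_eq)
    moreover have "feasible S I J N theta p a n" and "0 < N k'"
      using assms(5,8) k' by (simp_all add: optimal_def)
    ultimately obtain p' a' n' where "feasible S I J N theta p' a' n'"
      and "revenue I J theta p a n < revenue I J theta p' a' n'"
      using exchange_improves_revenue k k' \<open>theta k < theta k'\<close> by blast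
    then show False
      using assms(8) by (auto simp: optimal_def not_less[symmetric])
  qed
qed

end
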